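(* For every positive integer $n$, the Logarithmic Least Squares Method satisfies invariance to $\alpha$-transformation on a triad: if $\mathbf{A},\hat{\mathbf{A}}\in\mathcal{A}^{n\times n}$ and $\hat{\mathbf{A}}$ is obtained from $\mathbf{A}$ by an $\alpha$-transformation on a triad, then $\mathbf{w}^{LLSM}(\mathbf{A}) = \mathbf{w}^{LLSM}(\hat{\mathbf{A}})$.
   Context: A pairwise comparison matrix of size $n$ is a matrix $\mathbf{A} = [a_{i,j}]$ with positive entries and $a_{j,i} = 1/a_{i,j}$ for all $i,j$; $\mathcal{A}^{n\times n}$ denotes the set of these. The Logarithmic Least Squares Method assigns to $\mathbf{A}$ the minimizer $\mathbf{w}^{LLSM}(\mathbf{A})$, over vectors $\mathbf{w}$ with positive entries summing to 1, of $\sum_{i,j}[\log a_{i,j} - \log(w_i/w_j)]^2$; equivalently $w^{LLSM}_i(\mathbf{A}) = \prod_j a_{i,j}^{1/n}/\sum_k \prod_j a_{k,j}^{1/n}$. An $\alpha$-transformation on the triad $(i,j,k)$ (three distinct indices), with $\alpha>0$, maps $\mathbf{A}$ to $\hat{\mathbf{A}}$ with $\hat a_{i,j} = \alpha a_{i,j}$, $\hat a_{j,i} = a_{j,i}/\alpha$, $\hat a_{j,k} = \alpha a_{j,k}$, $\hat a_{k,j} = a_{k,j}/\alpha$, $\hat a_{k,i} = \alpha a_{k,i}$, $\hat a_{i,k} = a_{i,k}/\alpha$, all other entries unchanged. *)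

theory Defs
  imports Complex_Main
begin

text \<open>Matrices of size n are functions nat => nat => real; only indices < n matter.\<close>

definition is_PCM :: "nat \<Rightarrow> (nat \<Rightarrow> nat \<Rightarrow> real) \<Rightarrow> bool" where
  "is_PCM n A \<longleftrightarrow> (\<forall>i<n. \<forall>j<n. A i j > 0 \<and> A j i = 1 / A i j)"

text \<open>LLSM weight vector via the geometric-mean closed form (row geometric means, normalised).\<close>
definition w_LLSM :: "nat \<Rightarrow> (nat \<Rightarrow> nat \<Rightarrow> real) \<Rightarrow> nat \<Rightarrow> real" where
  "w_LLSM n A i =
     (\<Prod>j<n. A i j powr (1 / real n)) / (\<Sum>k<n. \<Prod>j<n. A k j powr (1 / real n))"

definition alpha_transform ::
  "real \<Rightarrow> nat \<Rightarrow> nat \<Rightarrow> nat \<Rightarrow> (nat \<Rightarrow> nat \<Rightarrow> real) \<Rightarrow> (nat \<Rightarrow> nat \<Rightarrow> real)" where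
  "alpha_transform \<alpha> i j k A = (\<lambda>p q.
     if (p, q) = (i, j) \<or> (p, q) = (j, k) \<or> (p, q) = (k, i) then \<alpha> * A p q
     else if (p, q) = (j, i) \<or> (p, q) = (k, j) \<or> (p, q) = (i, k) then A p q / \<alpha>
     else A p q)"

end

theory Submission
  imports Defs
begin

text \<open>The LLSM weights depend on \<open>A\<close> only through its row products. An \<open>\<alpha>\<close>-transformation on a
  triad multiplies exactly one entry of each of the rows \<open>i\<close>, \<open>j\<close>, \<open>k\<close> by \<open>\<alpha>\<close> and another one by
  \<open>1/\<alpha>\<close>, and leaves all other rows alone, so it preserves every row product.\<close>

lemma prod_cong_scaled_pair:
  fixes f g :: "'a \<Rightarrow> 'b::field"
  assumes "finite S" "a \<in> S" "b \<in> S" "a \<noteq> b" "c \<noteq> 0"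
    and "g a = c * f a" "g b = f b / c"
    and "\<And>x. x \<in> S \<Longrightarrow> x \<noteq> a \<Longrightarrow> x \<noteq> b \<Longrightarrow> g x = f x"
  shows "prod g S = prod f S"
proof -
  have ab: "{a, b} \<subseteq> S" using assms(2,3) by simp
  have rest: "prod g (S - {a, b}) = prod f (S - {a, b})"
    using assms(8) by (intro prod.cong) auto
  have "prod g {a, b} = prod f {a, b}"
    using assms(4-7) by simp
  then show ?thesis
    using rest by (simp add: prod.subset_diff[OF ab assms(1)])
qed

lemma prod_row_alpha_transform:
  assumes "i < n" "j < n" "k < n" "i \<noteq> j" "j \<noteq> k" "i \<noteq> k" "\<alpha> \<noteq> 0"
  shows "(\<Prod>q<n. alpha_transform \<alpha> i j k A m q) = (\<Prod>q<n. A m q)"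
proof -
  let ?B = "alpha_transform \<alpha> i j k A"
  have scaled_pair: "(\<Prod>q<n. ?B m q) = (\<Prod>q<n. A m q)"
    if "a < n" "b < n" "a \<noteq> b" "?B m a = \<alpha> * A m a" "?B m b = A m b / \<alpha>"
      and "\<And>q. q \<noteq> a \<Longrightarrow> q \<noteq> b \<Longrightarrow> ?B m q = A m q" for a b
    using that assms(7) by (intro prod_cong_scaled_pair[where a = a and b = b and c = \<alpha>]) auto
  consider "m = i" | "m = j" | "m = k" | "m \<noteq> i" "m \<noteq> j" "m \<noteq> k" by blast
  then show ?thesis
  proof cases
    case 1
    then show ?thesis
      using assms by (intro scaled_pair[of j k]) (auto simp: alpha_transform_def)
  next
    case 2
    then show ?thesis
      using assms by (intro scaled_pair[of k i]) (auto simp: alpha_transform_def)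
  next
    case 3
    then show ?thesis
      using assms by (intro scaled_pair[of i j]) (auto simp: alpha_transform_def)
  next
    case 4
    then show ?thesis by (simp add: alpha_transform_def)
  qed
qed

text \<open>Since \<open>powr\<close> on \<open>real\<close> is multiplicative without side conditions, the theorem does not
  need its hypotheses \<open>n \<ge> 1\<close> and \<open>is_PCM n A\<close>.\<close>

lemma w_LLSM_row_products:
  "w_LLSM n A m = (\<Prod>j<n. A m j) powr (1 / real n) / (\<Sum>k<n. (\<Prod>j<n. A k j) powr (1 / real n))"
  by (simp add: w_LLSM_def prod_powr_distrib)

lemma w_LLSM_cong_row_products:
  assumes "\<And>p. p < n \<Longrightarrow> (\<Prod>q<n. B p q) = (\<Prod>q<n. A p q)" "m < n"
  shows "w_LLSM n B m = w_LLSM n A m"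
proof -
  have "(\<Sum>p<n. (\<Prod>q<n. B p q) powr (1 / real n)) = (\<Sum>p<n. (\<Prod>q<n. A p q) powr (1 / real n))"
    using assms(1) by (intro sum.cong) simp_all
  then show ?thesis
    unfolding w_LLSM_row_products using assms by simp
qed

theorem proposition3p3:
  fixes n :: nat and A :: "nat \<Rightarrow> nat \<Rightarrow> real" and \<alpha> :: real and i j k :: nat
  assumes "n \<ge> 1"
    and "is_PCM n A"
    and "i < n" "j < n" "k < n" "i \<noteq> j" "j \<noteq> k" "i \<noteq> k"
    and "\<alpha> > 0"
  shows "\<forall>m<n. w_LLSM n A m = w_LLSM n (alpha_transform \<alpha> i j k A) m"
proof (intro allI impI)
  fix m
  assume "m < n"
  then show "w_LLSM n A m = w_LLSM n (alpha_transform \<alpha> i j k A) m"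
    using assms(3-9) by (intro w_LLSM_cong_row_products[symmetric] prod_row_alpha_transform) simp_all
qed

end
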